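(* Let $h_1,h_2$ be real numbers. The polynomial $h(t)=1+h_1t+h_2t^2+h_1t^3+t^4$ has only real negative roots if and only if $h_2-2h_1+2\geq0$, $h_1^2-4(h_2-2)\geq0$, and $h_1\geq4$. *)

theory Defs
  imports "HOL-Analysis.Analysis" "HOL-Computational_Algebra.Polynomial"
begin

definition hpoly :: "real \<Rightarrow> real \<Rightarrow> real poly" where
  "hpoly h1 h2 = [:1, h1, h2, h1, 1:]"

end

theory Submission
  imports Defs
begin

text \<open>Since \<open>h\<close> is palindromic, \<open>h(t) = t\<^sup>2 g(t + 1/t)\<close> with
  \<open>g(s) = s\<^sup>2 + h\<^sub>1 s + h\<^sub>2 - 2\<close>; hence \<open>h\<close> factors as
  \<open>(t\<^sup>2 - s\<^sub>1 t + 1)(t\<^sup>2 - s\<^sub>2 t + 1)\<close> over the roots \<open>s\<^sub>1, s\<^sub>2\<close> of \<open>g\<close>.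
  The roots of \<open>t\<^sup>2 - s t + 1\<close> are real and negative iff \<open>s\<close> is real and
  \<open>s \<le> -2\<close>, and by Vieta both roots of \<open>g\<close> are real and \<open>\<le> -2\<close> iff the discriminant
  of \<open>g\<close> is nonnegative, \<open>s\<^sub>1 + s\<^sub>2 = -h\<^sub>1 \<le> -4\<close> and
  \<open>(s\<^sub>1 + 2)(s\<^sub>2 + 2) = h\<^sub>2 - 2h\<^sub>1 + 2 \<ge> 0\<close>.\<close>

lemma poly_hpoly:
  "poly (map_poly complex_of_real (hpoly h1 h2)) z = 1 + h1 * z + h2 * z^2 + h1 * z^3 + z^4"
  by (simp add: hpoly_def map_poly_pCons algebra_simps power2_eq_square power3_eq_cube
      power4_eq_xxxx)

lemma palindromic_quartic_factor:
  fixes a b s1 s2 z :: "'a::comm_ring_1"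
  assumes "s1 + s2 = - a" and "s1 * s2 = b - 2"
  shows "1 + a * z + b * z^2 + a * z^3 + z^4 = (z^2 - s1 * z + 1) * (z^2 - s2 * z + 1)"
proof -
  have "(z^2 - s1 * z + 1) * (z^2 - s2 * z + 1)
      = 1 - (s1 + s2) * z + (2 + s1 * s2) * z^2 - (s1 + s2) * z^3 + z^4"
    by (simp add: algebra_simps power2_eq_square power3_eq_cube power4_eq_xxxx)
  then show ?thesis
    using assms by simp
qed

lemma ex_complex_sum_prod_eq: "\<exists>u v :: complex. u + v = p \<and> u * v = q"
proof -
  define r where "r = csqrt (p^2 - 4 * q)"
  have "(p + r)/2 + (p - r)/2 = p" and "(p + r)/2 * ((p - r)/2) = q"
    by (simp_all add: r_def field_simps power2_eq_square[symmetric])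
  then show ?thesis
    by blast
qed

lemma square_eq_of_real_nonneg_imp_Reals:
  fixes z :: complex
  assumes "z^2 = of_real r" and "0 \<le> r"
  shows "z \<in> \<real>"
proof -
  have "z^2 = (of_real (sqrt r))^2"
    using assms by (simp flip: of_real_power)
  then have "z = of_real (sqrt r) \<or> z = - of_real (sqrt r)"
    by (simp add: power2_eq_iff)
  then show ?thesis
    by auto
qed

lemma Reals_iff_discriminant_nonneg:
  fixes u v :: complex
  assumes "u + v = of_real p" and "u * v = of_real q"
  shows "u \<in> \<real> \<and> v \<in> \<real> \<longleftrightarrow> 0 \<le> p^2 - 4 * q"
proof -
  have disc: "(u - v)^2 = of_real (p^2 - 4 * q)"
    by (simp add: power2_eq_square algebra_simps flip: assms)
  show ?thesis
  proof
    assume "u \<in> \<real> \<and> v \<in> \<real>"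
    then obtain d where "u - v = of_real d"
      by (auto elim!: Reals_cases simp flip: of_real_diff)
    with disc have "p^2 - 4 * q = d^2"
      by (metis of_real_eq_iff of_real_power)
    then show "0 \<le> p^2 - 4 * q"
      by simp
  next
    assume "0 \<le> p^2 - 4 * q"
    then have "u - v \<in> \<real>"
      using disc square_eq_of_real_nonneg_imp_Reals by blast
    moreover have "u + v \<in> \<real>"
      using assms by simp
    moreover have "u = ((u + v) + (u - v))/2" and "v = ((u + v) - (u - v))/2"
      by simp_all
    ultimately show "u \<in> \<real> \<and> v \<in> \<real>"
      by (metis Reals_add Reals_diff Reals_divide Reals_numeral)
  qed
qed

lemma both_le_neg_two_iff:
  fixes a b :: real
  shows "a \<le> -2 \<and> b \<le> -2 \<longleftrightarrow> a + b \<le> -4 \<and> 0 \<le> (a + 2) * (b + 2)"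
  by (auto simp: zero_le_mult_iff)

lemma both_Reals_le_neg_two_iff:
  fixes u v :: complex
  assumes "u + v = of_real p" and "u * v = of_real q"
  shows "(u \<in> \<real> \<and> Re u \<le> -2) \<and> (v \<in> \<real> \<and> Re v \<le> -2)
    \<longleftrightarrow> 0 \<le> p^2 - 4 * q \<and> p \<le> -4 \<and> 0 \<le> q + 2 * p + 4"
proof (cases "u \<in> \<real> \<and> v \<in> \<real>")
  case True
  then obtain a b where ab: "u = of_real a" "v = of_real b"
    by (auto elim!: Reals_cases)
  with assms have "p = a + b" and "q = a * b"
    by (metis of_real_add of_real_eq_iff of_real_mult)+
  moreover have "0 \<le> p^2 - 4 * q"
    using True Reals_iff_discriminant_nonneg[OF assms] by blast
  ultimately show ?thesis
    using both_le_neg_two_iff[of a b] ab by (auto simp: algebra_simps)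
next
  case False
  then show ?thesis
    using Reals_iff_discriminant_nonneg[OF assms] by blast
qed

lemma reciprocal_sum_le_neg_two_iff:
  fixes a b :: real
  assumes "a * b = 1"
  shows "a + b \<le> -2 \<longleftrightarrow> a < 0"
proof
  assume "a + b \<le> -2"
  moreover have "0 < a \<and> 0 < b \<or> a < 0 \<and> b < 0"
    using assms zero_less_mult_iff[of a b] by simp
  ultimately show "a < 0"
    by auto
next
  assume "a < 0"
  have "a * (a + b + 2) = (a + 1)^2"
    using assms by (simp add: power2_eq_square algebra_simps)
  then have "0 \<le> a * (a + b + 2)"
    by simp
  with \<open>a < 0\<close> show "a + b \<le> -2"
    by (simp add: zero_le_mult_iff)
qed

lemma reciprocal_quadratic_roots_neg_real_iff:
  fixes s :: complex
  shows "(\<forall>z. z^2 - s * z + 1 = 0 \<longrightarrow> z \<in> \<real> \<and> Re z < 0) \<longleftrightarrow> s \<in> \<real> \<and> Re s \<le> -2"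
proof
  assume roots: "\<forall>z. z^2 - s * z + 1 = 0 \<longrightarrow> z \<in> \<real> \<and> Re z < 0"
  obtain u v where uv: "u + v = s" "u * v = 1"
    using ex_complex_sum_prod_eq by blast
  have "u^2 - s * u + 1 = 0" and "v^2 - s * v + 1 = 0"
    by (simp_all add: power2_eq_square algebra_simps flip: uv)
  with roots have "u \<in> \<real>" "Re u < 0" "v \<in> \<real>"
    by blast+
  then obtain a b where "u = of_real a" "v = of_real b" "a < 0"
    by (metis Reals_cases Re_complex_of_real)
  with uv have "s = of_real (a + b)" "a + b \<le> -2"
    using reciprocal_sum_le_neg_two_iff[of a b] by (simp_all flip: of_real_mult)
  then show "s \<in> \<real> \<and> Re s \<le> -2"
    by simp
next
  assume s: "s \<in> \<real> \<and> Re s \<le> -2"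
  show "\<forall>z. z^2 - s * z + 1 = 0 \<longrightarrow> z \<in> \<real> \<and> Re z < 0"
  proof (intro allI impI)
    fix z
    assume "z^2 - s * z + 1 = 0"
    then have sum_prod: "z + (s - z) = of_real (Re s)" "z * (s - z) = of_real 1"
      using s by (simp_all add: power2_eq_square algebra_simps)
    have "0 \<le> (Re s - 2) * (Re s + 2)"
      using s by (intro mult_nonpos_nonpos) auto
    then have "0 \<le> (Re s)^2 - 4 * 1"
      by (simp add: power2_eq_square algebra_simps)
    then have "z \<in> \<real> \<and> s - z \<in> \<real>"
      using Reals_iff_discriminant_nonneg[OF sum_prod] by blast
    then obtain a b where ab: "z = of_real a" "s - z = of_real b"
      by (auto elim!: Reals_cases)
    with sum_prod have "a + b = Re s" "a * b = 1"
      by (metis of_real_add of_real_mult of_real_eq_iff)+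
    with s have "a < 0"
      using reciprocal_sum_le_neg_two_iff[of a b] by simp
    with ab show "z \<in> \<real> \<and> Re z < 0"
      by simp
  qed
qed

theorem lemma3p2p3:
  fixes h1 h2 :: real
  shows "(\<forall>z::complex. poly (map_poly complex_of_real (hpoly h1 h2)) z = 0 \<longrightarrow>
            z \<in> \<real> \<and> Re z < 0)
         \<longleftrightarrow> (h2 - 2 * h1 + 2 \<ge> 0 \<and> h1\<^sup>2 - 4 * (h2 - 2) \<ge> 0 \<and> h1 \<ge> 4)"
proof -
  obtain s1 s2 :: complex where sum_prod: "s1 + s2 = of_real (- h1)" "s1 * s2 = of_real (h2 - 2)"
    using ex_complex_sum_prod_eq by blast
  have "poly (map_poly complex_of_real (hpoly h1 h2)) z
      = (z^2 - s1 * z + 1) * (z^2 - s2 * z + 1)" for z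
    unfolding poly_hpoly using sum_prod by (intro palindromic_quartic_factor) simp_all
  then have "(\<forall>z. poly (map_poly complex_of_real (hpoly h1 h2)) z = 0 \<longrightarrow> z \<in> \<real> \<and> Re z < 0)
      \<longleftrightarrow> (\<forall>z. z^2 - s1 * z + 1 = 0 \<longrightarrow> z \<in> \<real> \<and> Re z < 0)
        \<and> (\<forall>z. z^2 - s2 * z + 1 = 0 \<longrightarrow> z \<in> \<real> \<and> Re z < 0)"
    by auto
  also have "\<dots> \<longleftrightarrow> (s1 \<in> \<real> \<and> Re s1 \<le> -2) \<and> (s2 \<in> \<real> \<and> Re s2 \<le> -2)"
    by (simp only: reciprocal_quadratic_roots_neg_real_iff)
  also have "\<dots> \<longleftrightarrow> h2 - 2 * h1 + 2 \<ge> 0 \<and> h1\<^sup>2 - 4 * (h2 - 2) \<ge> 0 \<and> h1 \<ge> 4"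
    unfolding both_Reals_le_neg_two_iff[OF sum_prod] by (auto simp: algebra_simps)
  finally show ?thesis .
qed

end
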